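(* Let $G$ be a beetle-free graph and let $C$ be a clean shortest even hole of $G$. Then $N_G(C)\subseteq N_G^{1,1}(C)\cup N_G^{1}(C)\cup N_G^{2}(C)\cup N_G^{3}(C)$.
   Context: All graphs are finite, simple and undirected. A hole is an induced simple cycle with at least four nodes; it is even if it has an even number of nodes. A shortest even hole of $G$ is an even hole of $G$ with the minimum number of nodes among all even holes of $G$. For a subgraph $C$ of $G$, $N_G(C)$ is the set of nodes of $V(G)\setminus V(C)$ adjacent to some node of $C$. For a hole $C$ of $G$ and a node $x\notin V(C)$, let $N_C(x)=N_G(x)\cap V(C)$. The node $x$ is a major node of $C$ if $N_C(x)$ contains three distinct pairwise non-adjacent nodes; $M_G(C)$ is the set of major nodes of $C$. For $x\in N_G(C)\setminus M_G(C)$: $x\in N_G^i(C)$ ($1\le i\le 4$) if $|N_C(x)|=i$ and $C[N_C(x)]$ is connected; $x\in N_G^{i,j}(C)$ ($1\le i\le j\le 2$) if $C[N_C(x)]$ has exactly two connected components, with $i$ and $j$ nodes respectively. The hole $C$ is clean if $M_G(C)=N_G^{2,2}(C)=\varnothing$. A diamond is a $4$-cycle $b_1b_2b_3b_4b_1$ with exactly one chord $b_2b_4$. An induced subgraph $B$ of $G$ is a beetle of $G$ if $B$ is exactly the union of (1) a diamond on nodes $b_1,b_2,b_3,b_4$ (cycle $b_1b_2b_3b_4b_1$, chord $b_2b_4$) and (2) a tree $I$ of $G\setminus\{b_4\}$ having exactly three leaves $b_1,b_2,b_3$, such that $I\setminus\{b_1,b_2,b_3\}$ is an induced tree of $G$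 not adjacent to $b_4$. $G$ is beetle-free if it has no beetle. *)

theory Defs
  imports Main
begin

definition simple_graph :: "'a set \<Rightarrow> ('a \<Rightarrow> 'a \<Rightarrow> bool) \<Rightarrow> bool" where
  "simple_graph V E \<longleftrightarrow> finite V \<and> (\<forall>u v. E u v \<longrightarrow> u \<in> V \<and> v \<in> V)
     \<and> (\<forall>u v. E u v \<longrightarrow> E v u) \<and> (\<forall>u. \<not> E u u)"

definition restr :: "('a \<Rightarrow> 'a \<Rightarrow> bool) \<Rightarrow> 'a set \<Rightarrow> 'a \<Rightarrow> 'a \<Rightarrow> bool" where
  "restr E A u v \<longleftrightarrow> E u v \<and> u \<in> A \<and> v \<in> A"

definition comp_of :: "('a \<Rightarrow> 'a \<Rightarrow> bool) \<Rightarrow> 'a set \<Rightarrow> 'a \<Rightarrow> 'a set" where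
  "comp_of E A x = {y \<in> A. (restr E A)\<^sup>*\<^sup>* x y}"

definition comps :: "('a \<Rightarrow> 'a \<Rightarrow> bool) \<Rightarrow> 'a set \<Rightarrow> 'a set set" where
  "comps E A = comp_of E A ` A"

definition connected_on :: "('a \<Rightarrow> 'a \<Rightarrow> bool) \<Rightarrow> 'a set \<Rightarrow> bool" where
  "connected_on E A \<longleftrightarrow> A \<noteq> {} \<and> (\<forall>x\<in>A. \<forall>y\<in>A. (restr E A)\<^sup>*\<^sup>* x y)"

definition is_cycle_in :: "('a \<Rightarrow> 'a \<Rightarrow> bool) \<Rightarrow> 'a set \<Rightarrow> 'a list \<Rightarrow> bool" where
  "is_cycle_in E A cs \<longleftrightarrow> length cs \<ge> 3 \<and> distinct cs \<and> set cs \<subseteq> A \<and>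
     (\<forall>i < length cs. restr E A (cs ! i) (cs ! ((i + 1) mod length cs)))"

definition is_tree :: "('a \<Rightarrow> 'a \<Rightarrow> bool) \<Rightarrow> 'a set \<Rightarrow> bool" where
  "is_tree E A \<longleftrightarrow> finite A \<and> connected_on E A \<and> (\<nexists>cs. is_cycle_in E A cs)"

definition hole :: "'a set \<Rightarrow> ('a \<Rightarrow> 'a \<Rightarrow> bool) \<Rightarrow> 'a set \<Rightarrow> bool" where
  "hole V E C \<longleftrightarrow> C \<subseteq> V \<and> (\<exists>cs. set cs = C \<and> distinct cs \<and> length cs \<ge> 4 \<and>
     (\<forall>i < length cs. \<forall>j < length cs. E (cs ! i) (cs ! j) \<longleftrightarrow>
        (j = (i + 1) mod length cs \<or> i = (j + 1) mod length cs)))"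

definition even_hole :: "'a set \<Rightarrow> ('a \<Rightarrow> 'a \<Rightarrow> bool) \<Rightarrow> 'a set \<Rightarrow> bool" where
  "even_hole V E C \<longleftrightarrow> hole V E C \<and> even (card C)"

definition shortest_even_hole :: "'a set \<Rightarrow> ('a \<Rightarrow> 'a \<Rightarrow> bool) \<Rightarrow> 'a set \<Rightarrow> bool" where
  "shortest_even_hole V E C \<longleftrightarrow> even_hole V E C \<and>
     (\<forall>D. even_hole V E D \<longrightarrow> card C \<le> card D)"

definition nbhd :: "'a set \<Rightarrow> ('a \<Rightarrow> 'a \<Rightarrow> bool) \<Rightarrow> 'a set \<Rightarrow> 'a set" where
  "nbhd V E C = {x \<in> V - C. \<exists>c \<in> C. E x c}"

definition nbC :: "('a \<Rightarrow> 'a \<Rightarrow> bool) \<Rightarrow> 'a set \<Rightarrow> 'a \<Rightarrow> 'a set" where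
  "nbC E C x = {c \<in> C. E x c}"

definition major :: "'a set \<Rightarrow> ('a \<Rightarrow> 'a \<Rightarrow> bool) \<Rightarrow> 'a set \<Rightarrow> 'a set" where
  "major V E C = {x \<in> V - C. \<exists>a b c. a \<in> nbC E C x \<and> b \<in> nbC E C x \<and> c \<in> nbC E C x \<and>
      a \<noteq> b \<and> a \<noteq> c \<and> b \<noteq> c \<and> \<not> E a b \<and> \<not> E a c \<and> \<not> E b c}"

definition Ni :: "'a set \<Rightarrow> ('a \<Rightarrow> 'a \<Rightarrow> bool) \<Rightarrow> 'a set \<Rightarrow> nat \<Rightarrow> 'a set" where
  "Ni V E C i = {x \<in> nbhd V E C - major V E C.
      card (nbC E C x) = i \<and> connected_on E (nbC E C x)}"

definition Nij :: "'a set \<Rightarrow> ('a \<Rightarrow> 'a \<Rightarrow> bool) \<Rightarrow> 'a set \<Rightarrow> nat \<Rightarrow> nat \<Rightarrow> 'a set" where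
  "Nij V E C i j = {x \<in> nbhd V E C - major V E C.
      \<exists>P Q. comps E (nbC E C x) = {P, Q} \<and> P \<noteq> Q \<and> card P = i \<and> card Q = j}"

definition clean :: "'a set \<Rightarrow> ('a \<Rightarrow> 'a \<Rightarrow> bool) \<Rightarrow> 'a set \<Rightarrow> bool" where
  "clean V E C \<longleftrightarrow> major V E C = {} \<and> Nij V E C 2 2 = {}"

definition diamond_edge :: "'a \<Rightarrow> 'a \<Rightarrow> 'a \<Rightarrow> 'a \<Rightarrow> 'a \<Rightarrow> 'a \<Rightarrow> bool" where
  "diamond_edge b1 b2 b3 b4 u v \<longleftrightarrow>
     {u, v} \<in> {{b1, b2}, {b2, b3}, {b3, b4}, {b4, b1}, {b2, b4}}"

definition beetle :: "'a set \<Rightarrow> ('a \<Rightarrow> 'a \<Rightarrow> bool) \<Rightarrow> 'a \<Rightarrow> 'a \<Rightarrow> 'a \<Rightarrow> 'a \<Rightarrow> 'a set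
    \<Rightarrow> ('a \<Rightarrow> 'a \<Rightarrow> bool) \<Rightarrow> bool" where
  "beetle V E b1 b2 b3 b4 T F \<longleftrightarrow>
     distinct [b1, b2, b3, b4] \<and> {b1, b2, b3, b4} \<subseteq> V \<and>
     E b1 b2 \<and> E b2 b3 \<and> E b3 b4 \<and> E b4 b1 \<and> E b2 b4 \<and> \<not> E b1 b3 \<and>
     T \<subseteq> V - {b4} \<and> {b1, b2, b3} \<subseteq> T \<and>
     (\<forall>u v. F u v \<longrightarrow> u \<in> T \<and> v \<in> T \<and> E u v) \<and>
     (\<forall>u v. F u v \<longrightarrow> F v u) \<and>
     is_tree F T \<and>
     {v \<in> T. card {u. F v u} = 1} = {b1, b2, b3} \<and>
     (\<forall>u \<in> insert b4 T. \<forall>v \<in> insert b4 T.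
        E u v \<longleftrightarrow> (F u v \<or> diamond_edge b1 b2 b3 b4 u v)) \<and>
     is_tree E (T - {b1, b2, b3}) \<and>
     (\<forall>u \<in> T - {b1, b2, b3}. \<not> E u b4)"

definition beetle_free :: "'a set \<Rightarrow> ('a \<Rightarrow> 'a \<Rightarrow> bool) \<Rightarrow> bool" where
  "beetle_free V E \<longleftrightarrow> (\<nexists>b1 b2 b3 b4 T F. beetle V E b1 b2 b3 b4 T F)"

end

theory Submission
  imports Defs
begin

text \<open>
  Enumerate the hole as \<open>c 0, \<dots>, c (n - 1)\<close> and let \<open>x\<close> be a neighbour of it. As \<open>x\<close> is not
  major, its neighbours on the hole contain no three pairwise non-adjacent nodes. If \<open>x\<close> is
  adjacent to \<open>c p\<close> and \<open>c (p + d)\<close> but to nothing strictly between them, then \<open>x\<close> together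
  with this arc is a hole of length \<open>d + 2\<close>, so by minimality of \<open>C\<close> the arc length \<open>d\<close> is
  odd whenever \<open>d + 2 < n\<close>. If the neighbours of \<open>x\<close> are independent there are at most two of
  them. Otherwise \<open>x\<close> sees an edge \<open>c a, c (a + 1)\<close>; a further neighbour away from this edge
  would cut the rest of the hole into two arcs of total length \<open>n - 1\<close>, one of them even, and
  a second edge is excluded by cleanness. What remains is a path of two, three or four
  consecutive neighbours, and four consecutive neighbours \<open>c p, \<dots>, c (p + 3)\<close> give a beetle:
  the diamond \<open>c (p + 1), x, c (p + 3), c (p + 2)\<close> together with the tree consisting of the
  path \<open>C - c (p + 2)\<close> and the edge \<open>x c p\<close>.
\<close>

lemma connected_onI_root:
  assumes "symp F" and "r \<in> A" and "\<forall>y\<in>A. (restr F A)\<^sup>*\<^sup>* r y"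
  shows "connected_on F A"
proof -
  have "symp (restr F A)" using assms(1) by (auto simp: restr_def symp_def)
  then have "symp (restr F A)\<^sup>*\<^sup>*" by (rule symp_rtranclp)
  then have "(restr F A)\<^sup>*\<^sup>* y z" if "y \<in> A" "z \<in> A" for y z
    using assms(3) that by (meson rtranclp_trans sympD)
  then show ?thesis
    using assms(2) unfolding connected_on_def by blast
qed

lemma connected_on_singleton: "connected_on F {u}"
  by (auto simp: connected_on_def)

lemma connected_on_edge:
  assumes "symp F" and "F u v"
  shows "connected_on F {u, v}"
proof (rule connected_onI_root[OF assms(1), of u])
  have "restr F {u, v} u v" using assms(2) by (simp add: restr_def)
  then show "\<forall>y\<in>{u, v}. (restr F {u, v})\<^sup>*\<^sup>* u y" by auto
qed simp

lemma connected_on_path3: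
  assumes "symp F" and "F v u" and "F v w"
  shows "connected_on F {u, v, w}"
proof (rule connected_onI_root[OF assms(1), of v])
  have "restr F {u, v, w} v u" "restr F {u, v, w} v w" using assms(2,3) by (auto simp: restr_def)
  then show "\<forall>y\<in>{u, v, w}. (restr F {u, v, w})\<^sup>*\<^sup>* v y" by auto
qed simp

lemma comp_of_eq_closed_connected:
  assumes "P \<subseteq> N" and "connected_on F P" and closed: "\<forall>u\<in>P. \<forall>v\<in>N. F u v \<longrightarrow> v \<in> P"
    and "u \<in> P"
  shows "comp_of F N u = P"
proof
  show "comp_of F N u \<subseteq> P"
  proof
    fix y assume "y \<in> comp_of F N u"
    then have "(restr F N)\<^sup>*\<^sup>* u y" by (simp add: comp_of_def)
    then show "y \<in> P"
      by induction (use \<open>u \<in> P\<close> closed in \<open>auto simp: restr_def\<close>)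
  qed
next
  show "P \<subseteq> comp_of F N u"
  proof
    fix y assume "y \<in> P"
    then have "(restr F P)\<^sup>*\<^sup>* u y" using assms(2,4) by (simp add: connected_on_def)
    moreover have "restr F P \<le> restr F N" using assms(1) by (auto simp: restr_def)
    ultimately have "(restr F N)\<^sup>*\<^sup>* u y" using rtranclp_mono by blast
    then show "y \<in> comp_of F N u" using \<open>y \<in> P\<close> assms(1) by (auto simp: comp_of_def)
  qed
qed

lemma comps_eq_doubleton:
  assumes "N = P \<union> Q" and "P \<noteq> {}" and "Q \<noteq> {}"
    and "connected_on F P" and "connected_on F Q"
    and "\<forall>u\<in>P. \<forall>v\<in>N. F u v \<longrightarrow> v \<in> P" and "\<forall>u\<in>Q. \<forall>v\<in>N. F u v \<longrightarrow> v \<in> Q"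
  shows "comps F N = {P, Q}"
proof -
  have "P \<subseteq> N" "Q \<subseteq> N" using assms(1) by blast+
  have P: "comp_of F N u = P" if "u \<in> P" for u
    by (rule comp_of_eq_closed_connected[OF \<open>P \<subseteq> N\<close> assms(4,6) that])
  have Q: "comp_of F N u = Q" if "u \<in> Q" for u
    by (rule comp_of_eq_closed_connected[OF \<open>Q \<subseteq> N\<close> assms(5,7) that])
  obtain p q where "p \<in> P" "q \<in> Q" using assms(2,3) by blast
  then have "P \<in> comp_of F N ` N" "Q \<in> comp_of F N ` N"
    using P Q assms(1) by (metis UnI1 image_eqI, metis UnI2 image_eqI)
  moreover have "comp_of F N ` N \<subseteq> {P, Q}" using P Q assms(1) by blast
  ultimately show ?thesis unfolding comps_def by blast
qed

text \<open>
  A cycle has a vertex of maximal weight, and its two cycle neighbours are distinct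
  neighbours of no larger weight.
\<close>
lemma no_cycle_if_unique_lower_neighbour:
  fixes w :: "'a \<Rightarrow> nat"
  assumes "symp F"
    and unique: "\<And>v u1 u2. v \<in> A \<Longrightarrow> u1 \<in> A \<Longrightarrow> u2 \<in> A \<Longrightarrow> F v u1 \<Longrightarrow> F v u2 \<Longrightarrow>
      w u1 \<le> w v \<Longrightarrow> w u2 \<le> w v \<Longrightarrow> u1 = u2"
  shows "\<not> is_cycle_in F A cs"
proof
  assume "is_cycle_in F A cs"
  then have m3: "3 \<le> length cs" and "distinct cs" and "set cs \<subseteq> A"
    and adj: "\<forall>i<length cs. restr F A (cs!i) (cs!((i+1) mod length cs))"
    by (auto simp: is_cycle_in_def)
  let ?m = "length cs"
  obtain i where i: "i < ?m" and imax: "\<And>j. j < ?m \<Longrightarrow> w (cs!j) \<le> w (cs!i)"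
  proof -
    have "Max (w ` set cs) \<in> w ` set cs" using m3 by (intro Max_in) auto
    then obtain i where "i < ?m" "w (cs!i) = Max (w ` set cs)" by (auto simp: in_set_conv_nth)
    then show thesis using that by simp
  qed
  define j1 where "j1 = (if i+1 = ?m then 0 else i+1)"
  define j0 where "j0 = (if i = 0 then ?m-1 else i-1)"
  have j: "j1 < ?m" "j0 < ?m" "(i+1) mod ?m = j1" "(j0+1) mod ?m = i"
    unfolding j1_def j0_def using i m3 by auto
  have "F (cs!i) (cs!j1)" "F (cs!i) (cs!j0)"
    using adj i j assms(1) by (auto simp: restr_def dest: sympD)
  then have "cs!j1 = cs!j0"
    using unique imax i j \<open>set cs \<subseteq> A\<close> by (meson nth_mem subsetD)
  then have "j1 = j0" using \<open>distinct cs\<close> j by (simp add: nth_eq_iff_index_eq)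
  then show False unfolding j1_def j0_def using i m3 by (auto split: if_splits)
qed

lemma card_ne_1_if_two_distinct: "a \<in> A \<Longrightarrow> b \<in> A \<Longrightarrow> a \<noteq> b \<Longrightarrow> card A \<noteq> 1"
  by (metis card_1_singletonE singletonD)

definition cyc_adj :: "nat \<Rightarrow> nat \<Rightarrow> nat \<Rightarrow> bool" where
  "cyc_adj n s t \<longleftrightarrow> t = s+1 \<or> s = t+1 \<or> (s = n-1 \<and> t = 0) \<or> (t = n-1 \<and> s = 0)"

lemma mod_add_left_cancel_less:
  fixes p s t n :: nat
  assumes "s < n" "t < n"
  shows "(p+s) mod n = (p+t) mod n \<longleftrightarrow> s = t"
proof
  assume "(p+s) mod n = (p+t) mod n"
  then have "s mod n = t mod n" using nat_mod_eq_iff by auto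
  then show "s = t" using assms by simp
qed simp

lemma unique_lower_cyc_adj_avoiding_2:
  fixes n :: nat
  defines "r \<equiv> \<lambda>k::nat. if k = 0 then n else if k = 1 then n+1 else k"
  assumes "4 \<le> n" "s1 < n" "s2 < n" "t < n" "s1 \<noteq> 2" "s2 \<noteq> 2" "t \<noteq> 2"
    "cyc_adj n t s1" "cyc_adj n t s2" "r s1 \<le> r t" "r s2 \<le> r t"
  shows "s1 = s2"
  using assms unfolding cyc_adj_def by (auto split: if_splits)

lemma unique_lower_cyc_adj_avoiding_123:
  fixes n :: nat
  defines "r \<equiv> \<lambda>k::nat. if k = 0 then n else k"
  assumes "4 \<le> n" "s1 < n" "s2 < n" "t < n" "s1 \<notin> {1,2,3}" "s2 \<notin> {1,2,3}" "t \<notin> {1,2,3}"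
    "cyc_adj n t s1" "cyc_adj n t s2" "r s1 \<le> r t" "r s2 \<le> r t"
  shows "s1 = s2"
  using assms unfolding cyc_adj_def by (auto split: if_splits)

locale shortest_even_hole_vertex =
  fixes V :: "'a set" and E :: "'a \<Rightarrow> 'a \<Rightarrow> bool" and C :: "'a set" and cs :: "'a list"
    and x :: 'a
  assumes graph: "simple_graph V E"
    and set_cs: "set cs = C" and distinct_cs: "distinct cs" and length_cs: "4 \<le> length cs"
    and E_cs: "\<forall>i<length cs. \<forall>j<length cs.
      E (cs!i) (cs!j) \<longleftrightarrow> (j = (i+1) mod length cs \<or> i = (j+1) mod length cs)"
    and C_V: "C \<subseteq> V" and x_V: "x \<in> V" and x_C: "x \<notin> C"
    and even_length: "even (length cs)"
    and shortest: "\<forall>D. even_hole V E D \<longrightarrow> length cs \<le> card D"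
begin

abbreviation "n \<equiv> length cs"

definition c :: "nat \<Rightarrow> 'a" where "c i = cs ! (i mod n)"

lemma n_pos: "0 < n"
  using length_cs by linarith

lemma c_add_n: "c (i + n) = c i"
  by (simp add: c_def)

lemma c_in_C: "c i \<in> C"
  using set_cs n_pos by (auto simp: c_def)

lemma c_in_V: "c i \<in> V"
  using c_in_C C_V by auto

lemma c_ne_x: "c i \<noteq> x"
  using c_in_C x_C by auto

lemma c_eq_iff: "c i = c j \<longleftrightarrow> i mod n = j mod n"
  using distinct_cs n_pos by (simp add: c_def nth_eq_iff_index_eq)

lemma c_add_eq_iff: "s < n \<Longrightarrow> t < n \<Longrightarrow> c (p+s) = c (p+t) \<longleftrightarrow> s = t"
  by (simp add: c_eq_iff mod_add_left_cancel_less)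

lemma c_add_mod: "c (a + k + t) = c (a + (k + t) mod n)"
  by (simp add: c_eq_iff add.assoc mod_add_right_eq)

lemma E_sym: "E u v \<Longrightarrow> E v u"
  using graph by (auto simp: simple_graph_def)

lemma symp_E: "symp E"
  using E_sym by (rule sympI)

lemma E_irrefl: "\<not> E u u"
  using graph by (auto simp: simple_graph_def)

lemma E_c_iff: "E (c i) (c j) \<longleftrightarrow> j mod n = Suc i mod n \<or> i mod n = Suc j mod n"
  using E_cs n_pos by (simp add: c_def mod_Suc_eq)

lemma E_c_Suc: "E (c i) (c (Suc i))"
  using E_c_iff by simp

lemma Suc_add_mod_iff:
  assumes "s < n" "t < n"
  shows "(p+t) mod n = Suc (p+s) mod n \<longleftrightarrow> t = s+1 \<or> (s = n-1 \<and> t = 0)"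
proof (cases "s+1 < n")
  case True
  have "(p+t) mod n = (p+(s+1)) mod n \<longleftrightarrow> t = s+1"
    using True assms by (metis mod_add_left_cancel_less)
  then show ?thesis using True by auto
next
  case False
  then have "s = n - 1" using assms by simp
  then have "Suc (p+s) = p + n" using n_pos by simp
  then have "Suc (p+s) mod n = (p+0) mod n" by (simp only: mod_add_self2 add_0_right)
  moreover have "(p+t) mod n = (p+0) mod n \<longleftrightarrow> t = 0"
    by (rule mod_add_left_cancel_less[OF assms(2) n_pos])
  ultimately show ?thesis using \<open>s = n - 1\<close> by auto
qed

lemma E_c_add_iff: "s < n \<Longrightarrow> t < n \<Longrightarrow> E (c (p+s)) (c (p+t)) \<longleftrightarrow> cyc_adj n s t"
  unfolding E_c_iff cyc_adj_def using Suc_add_mod_iff by auto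

lemma ex_c_add_eq_if_in_C: assumes "v \<in> C" shows "\<exists>t<n. v = c (p+t)"
proof -
  obtain k where k: "k < n" "v = cs ! k" using assms set_cs by (auto simp: in_set_conv_nth)
  define t where "t = (k + n - p mod n) mod n"
  have "(p + t) mod n = (p + (k + n - p mod n)) mod n"
    unfolding t_def by (simp add: mod_add_right_eq)
  also have "p + (k + n - p mod n) = (p div n) * n + k + n"
    using mod_less_divisor[OF n_pos, of p] div_mult_mod_eq[of p n] by linarith
  also have "((p div n) * n + k + n) mod n = k" using k by simp
  finally have "c (p+t) = v" using k by (simp add: c_def)
  moreover have "t < n" using n_pos by (simp add: t_def)
  ultimately show ?thesis by auto
qed

definition offset :: "nat \<Rightarrow> 'a \<Rightarrow> nat" where
  "offset p v = (SOME t. t < n \<and> v = c (p+t))"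

lemma offset_c: "t < n \<Longrightarrow> offset p (c (p+t)) = t"
  unfolding offset_def by (rule some_equality) (use c_add_eq_iff in auto)

lemma hole_through_arc:
  assumes "2 \<le> d" and "d + 1 < n" and "E x (c p)" and "E x (c (p+d))"
    and between: "\<forall>t. 0 < t \<and> t < d \<longrightarrow> \<not> E x (c (p+t))"
  defines "hs \<equiv> x # map (\<lambda>t. c (p+t)) [0..<Suc d]"
  shows "hole V E (set hs)" and "card (set hs) = d + 2"
proof -
  have length_hs: "length hs = d + 2" by (simp add: hs_def)
  have hs_0: "hs ! 0 = x" by (simp add: hs_def)
  have hs_Suc: "hs ! Suc k = c (p+k)" if "k \<le> d" for k
    using that by (simp add: hs_def del: upt_Suc)
  have "inj_on (\<lambda>t. c (p+t)) {0..<Suc d}"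
    by (rule inj_onI) (use c_add_eq_iff assms(2) in auto)
  then have distinct_hs: "distinct hs"
    unfolding hs_def using c_ne_x by (auto simp: distinct_map simp del: upt_Suc)
  have E_x_arc: "E x (c (p+t)) \<longleftrightarrow> t = 0 \<or> t = d" if "t \<le> d" for t
    using that assms(3,4) between by (metis add_0_right le_neq_implies_less not_gr_zero)
  have E_arc: "E (c (p+s)) (c (p+t)) \<longleftrightarrow> t = s+1 \<or> s = t+1" if "s \<le> d" "t \<le> d" for s t
    using that assms(2) E_c_add_iff[of s t p] unfolding cyc_adj_def by auto
  have mod_wrap: "(Suc s + 1) mod (d+2) = (if s = d then 0 else s+2)" if "s \<le> d" for s
    using that by auto
  have mod_1: "1 mod (d+2) = 1" using assms(1) by simp
  have E_hs: "E (hs!i) (hs!j) \<longleftrightarrow> j = (i+1) mod (d+2) \<or> i = (j+1) mod (d+2)"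
    if "i < d+2" "j < d+2" for i j
  proof (cases i; cases j)
    fix t assume "i = 0" "j = Suc t"
    then show ?thesis using that hs_0 hs_Suc E_x_arc mod_wrap mod_1 by auto
  next
    fix s assume "i = Suc s" "j = 0"
    have "E (c (p+s)) x \<longleftrightarrow> E x (c (p+s))" using E_sym by blast
    then show ?thesis using that \<open>i = Suc s\<close> \<open>j = 0\<close> hs_0 hs_Suc E_x_arc mod_wrap mod_1 by auto
  next
    fix s t assume "i = Suc s" "j = Suc t"
    then show ?thesis using that hs_Suc E_arc mod_wrap by auto
  qed (use hs_0 E_irrefl mod_1 in simp)
  have "set hs \<subseteq> V" unfolding hs_def using x_V c_in_V by auto
  then show "hole V E (set hs)"
    unfolding hole_def using distinct_hs length_hs E_hs assms(1) by (intro conjI exI[of _ hs]) auto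
  show "card (set hs) = d + 2" using distinct_hs length_hs distinct_card by metis
qed

lemma odd_arc_between_neighbours:
  assumes "2 \<le> d" and "d + 2 < n" and "E x (c p)" and "E x (c (p+d))"
    and "\<forall>t. 0 < t \<and> t < d \<longrightarrow> \<not> E x (c (p+t))"
  shows "odd d"
proof
  assume "even d"
  then have "n \<le> d + 2"
    using hole_through_arc[of d p] assms shortest unfolding even_hole_def by force
  then show False using assms(2) by simp
qed

lemma small_positions: "0 < n" "1 < n" "2 < n" "3 < n" "n - 1 < n"
  using length_cs by auto

context
  fixes p :: nat
  assumes four_consecutive: "\<forall>t<n. E x (c (p+t)) \<longleftrightarrow> t \<le> 3"
begin

text \<open>
  The tree \<open>I\<close> of the beetle with diamond \<open>c (p + 1), x, c (p + 3), c (p + 2)\<close>: the path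
  \<open>C - c (p + 2)\<close> from \<open>c (p + 3)\<close> round to \<open>c (p + 1)\<close> with the pendant edge \<open>c p, x\<close>.
\<close>
definition tree_vertices :: "'a set" where
  "tree_vertices = insert x ((\<lambda>t. c (p+t)) ` {t. t < n \<and> t \<noteq> 2})"

definition tree_edge :: "'a \<Rightarrow> 'a \<Rightarrow> bool" where
  "tree_edge u v \<longleftrightarrow> u \<in> tree_vertices \<and> v \<in> tree_vertices \<and> E u v \<and>
     {u, v} \<noteq> {x, c (p+1)} \<and> {u, v} \<noteq> {x, c (p+3)}"

definition inner_vertices :: "'a set" where
  "inner_vertices = tree_vertices - {c (p+1), x, c (p+3)}"

lemma c_in_tree_vertices_iff: "t < n \<Longrightarrow> c (p+t) \<in> tree_vertices \<longleftrightarrow> t \<noteq> 2"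
  unfolding tree_vertices_def using c_add_eq_iff c_ne_x by auto

lemma x_in_tree_vertices: "x \<in> tree_vertices"
  by (simp add: tree_vertices_def)

lemma tree_vertices_cases:
  assumes "v \<in> tree_vertices"
  obtains "v = x" | t where "t < n" "t \<noteq> 2" "v = c (p+t)"
  using assms by (auto simp: tree_vertices_def)

lemma symp_tree_edge: "symp tree_edge"
  unfolding tree_edge_def using E_sym by (auto simp: insert_commute intro: sympI)

lemma tree_edgeD: "tree_edge u v \<Longrightarrow> u \<in> tree_vertices \<and> v \<in> tree_vertices \<and> E u v"
  by (simp add: tree_edge_def)

lemma tree_edge_c_c_iff:
  assumes "s < n" "t < n"
  shows "tree_edge (c (p+s)) (c (p+t)) \<longleftrightarrow> s \<noteq> 2 \<and> t \<noteq> 2 \<and> cyc_adj n s t"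
  unfolding tree_edge_def using c_in_tree_vertices_iff[OF assms(1)] c_in_tree_vertices_iff[OF assms(2)]
    E_c_add_iff[OF assms] c_ne_x by (auto simp: doubleton_eq_iff)

lemma tree_edge_x_c_iff:
  assumes "t < n"
  shows "tree_edge x (c (p+t)) \<longleftrightarrow> t = 0"
proof -
  have "{x, c (p+t)} = {x, c (p+1)} \<longleftrightarrow> t = 1" "{x, c (p+t)} = {x, c (p+3)} \<longleftrightarrow> t = 3"
    using c_add_eq_iff[OF assms, of 1 p] c_add_eq_iff[OF assms, of 3 p] small_positions c_ne_x
    by (auto simp: doubleton_eq_iff)
  then show ?thesis
    unfolding tree_edge_def using x_in_tree_vertices c_in_tree_vertices_iff[OF assms]
      four_consecutive assms by auto
qed

lemma tree_edge_c_x_iff: "t < n \<Longrightarrow> tree_edge (c (p+t)) x \<longleftrightarrow> t = 0"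
  using tree_edge_x_c_iff symp_tree_edge by (blast dest: sympD)

lemma not_tree_edge_x_x: "\<not> tree_edge x x"
  using E_irrefl tree_edge_def by auto

lemma connected_tree_vertices: "connected_on tree_edge tree_vertices"
proof -
  let ?R = "restr tree_edge tree_vertices"
  have R: "?R u v" if "tree_edge u v" for u v using that tree_edgeD by (simp add: restr_def)
  have from_3: "?R\<^sup>*\<^sup>* (c (p+3)) (c (p+(3+k)))" if "3+k < n" for k
    using that
  proof (induction k)
    case (Suc k)
    have "tree_edge (c (p+(3+k))) (c (p+(3+Suc k)))"
      using tree_edge_c_c_iff[of "3+k" "3+Suc k"] Suc.prems by (simp add: cyc_adj_def)
    moreover have "?R\<^sup>*\<^sup>* (c (p+3)) (c (p+(3+k)))" using Suc by simp
    ultimately show ?case using R by (meson rtranclp.rtrancl_into_rtrancl)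
  qed simp
  have to_0: "?R\<^sup>*\<^sup>* (c (p+3)) (c p)"
  proof -
    have "3 + (n-4) = n - 1" using length_cs by simp
    then have "?R\<^sup>*\<^sup>* (c (p+3)) (c (p+(n-1)))" using from_3[of "n-4"] length_cs by simp
    moreover have "tree_edge (c (p+(n-1))) (c (p+0))"
      using tree_edge_c_c_iff[of "n-1" 0] small_positions length_cs by (simp add: cyc_adj_def)
    ultimately show ?thesis using R by (metis add_0_right rtranclp.rtrancl_into_rtrancl)
  qed
  have "tree_edge (c (p+0)) (c (p+1))"
    using tree_edge_c_c_iff[of 0 1] small_positions by (simp add: cyc_adj_def)
  then have to_1: "?R\<^sup>*\<^sup>* (c (p+3)) (c (p+1))"
    using to_0 R by (metis add_0_right rtranclp.rtrancl_into_rtrancl)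
  have "tree_edge (c (p+0)) x" using tree_edge_c_x_iff[of 0] small_positions by simp
  then have to_x: "?R\<^sup>*\<^sup>* (c (p+3)) x"
    using to_0 R by (metis add_0_right rtranclp.rtrancl_into_rtrancl)
  have "?R\<^sup>*\<^sup>* (c (p+3)) y" if "y \<in> tree_vertices" for y
    using that
  proof (cases rule: tree_vertices_cases)
    case (2 t)
    then consider "t = 0" | "t = 1" | "3 \<le> t" by linarith
    then show ?thesis using 2 to_0 to_1 from_3[of "t-3"] by cases auto
  qed (use to_x in simp)
  moreover have "c (p+3) \<in> tree_vertices" using c_in_tree_vertices_iff small_positions by simp
  ultimately show ?thesis using connected_onI_root[OF symp_tree_edge] by blast
qed

text \<open>Weights increase along the path from \<open>c (p + 3)\<close> to \<open>c (p + 1)\<close>, and \<open>x\<close> is heaviest.\<close>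
lemma acyclic_tree_vertices: "\<not> is_cycle_in tree_edge tree_vertices cs'"
proof -
  define w where "w v = (if v = x then n+2 else
    (let t = offset p v in if t = 0 then n else if t = 1 then n+1 else t))" for v
  have w_c: "w (c (p+t)) = (if t = 0 then n else if t = 1 then n+1 else t)" if "t < n" for t
    unfolding w_def using offset_c[OF that] c_ne_x by simp
  show ?thesis
  proof (rule no_cycle_if_unique_lower_neighbour[OF symp_tree_edge, where w = w])
    fix v u1 u2 assume v: "v \<in> tree_vertices" and u: "u1 \<in> tree_vertices" "u2 \<in> tree_vertices"
      and e: "tree_edge v u1" "tree_edge v u2" and le: "w u1 \<le> w v" "w u2 \<le> w v"
    show "u1 = u2"
      using v
    proof (cases rule: tree_vertices_cases)
      case 1
      then show ?thesis
        using u e not_tree_edge_x_x tree_edge_x_c_iff by (metis tree_vertices_cases)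
    next
      case (2 t)
      have "u \<noteq> x" if "u \<in> {u1, u2}" for u
      proof
        assume "u = x"
        then have "t = 0" using that e tree_edge_c_x_iff 2 by auto
        then show False using w_c[of 0] le that \<open>u = x\<close> 2 small_positions by (auto simp: w_def)
      qed
      then obtain s1 s2 where "s1 < n" "s1 \<noteq> 2" "u1 = c (p+s1)" "s2 < n" "s2 \<noteq> 2" "u2 = c (p+s2)"
        using u by (metis insertCI tree_vertices_cases)
      then show ?thesis
        using unique_lower_cyc_adj_avoiding_2[of n s1 s2 t] length_cs 2 e le w_c tree_edge_c_c_iff by auto
    qed
  qed
qed

lemma tree_tree_vertices: "is_tree tree_edge tree_vertices"
  unfolding is_tree_def tree_vertices_def
  using connected_tree_vertices acyclic_tree_vertices by (simp add: tree_vertices_def)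

lemma tree_edge_x_iff: "tree_edge x u \<longleftrightarrow> u = c p"
proof
  assume "tree_edge x u"
  then show "u = c p"
    using tree_edgeD not_tree_edge_x_x tree_edge_x_c_iff by (metis add_0_right tree_vertices_cases)
qed (use tree_edge_x_c_iff[of 0] small_positions in simp)

lemma tree_edge_1_iff: "tree_edge (c (p+1)) u \<longleftrightarrow> u = c p"
proof
  assume e: "tree_edge (c (p+1)) u"
  then have "u \<in> tree_vertices" using tree_edgeD by blast
  then show "u = c p"
  proof (cases rule: tree_vertices_cases)
    case (2 s)
    then have "s = 0"
      using e tree_edge_c_c_iff[of 1 s] small_positions length_cs by (auto simp: cyc_adj_def)
    then show ?thesis using 2 by simp
  qed (use e tree_edge_c_x_iff[of 1] small_positions in simp)
qed (use tree_edge_c_c_iff[of 1 0] small_positions in \<open>simp add: cyc_adj_def\<close>)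

lemma tree_edge_3_iff:
  defines "s3 \<equiv> if n = 4 then 0 else 4"
  shows "tree_edge (c (p+3)) u \<longleftrightarrow> u = c (p+s3)"
proof
  assume e: "tree_edge (c (p+3)) u"
  then have "u \<in> tree_vertices" using tree_edgeD by blast
  then show "u = c (p+s3)"
  proof (cases rule: tree_vertices_cases)
    case (2 s)
    then have "s = s3"
      using e tree_edge_c_c_iff[of 3 s] small_positions length_cs by (auto simp: cyc_adj_def s3_def)
    then show ?thesis using 2 by simp
  qed (use e tree_edge_c_x_iff[of 3] small_positions in simp)
next
  assume "u = c (p+s3)"
  then show "tree_edge (c (p+3)) u"
    using tree_edge_c_c_iff[of 3 s3] small_positions length_cs by (auto simp: cyc_adj_def s3_def)
qed

lemma card_tree_edge_ne_1:
  assumes "t < n" "t \<notin> {1,2,3}"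
  shows "card {u. tree_edge (c (p+t)) u} \<noteq> 1"
proof -
  define t' where "t' = (if t = 0 then 1 else t - 1)"
  define t'' where "t'' = (if t = 0 then n - 1 else if t + 1 < n then t + 1 else 0)"
  have "t' < n" "t'' < n" "t' \<noteq> t''" "t' \<noteq> 2" "t'' \<noteq> 2" "cyc_adj n t t'" "cyc_adj n t t''"
    unfolding t'_def t''_def cyc_adj_def using assms length_cs by auto
  then have "tree_edge (c (p+t)) (c (p+t'))" "tree_edge (c (p+t)) (c (p+t''))"
    "c (p+t') \<noteq> c (p+t'')"
    using tree_edge_c_c_iff c_add_eq_iff assms by auto
  then show ?thesis using card_ne_1_if_two_distinct[of "c (p+t')" _ "c (p+t'')"] by auto
qed

lemma leaves_tree_vertices:
  "{v \<in> tree_vertices. card {u. tree_edge v u} = 1} = {c (p+1), x, c (p+3)}"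
proof
  show "{v \<in> tree_vertices. card {u. tree_edge v u} = 1} \<subseteq> {c (p+1), x, c (p+3)}"
  proof
    fix v assume "v \<in> {v \<in> tree_vertices. card {u. tree_edge v u} = 1}"
    then have "v \<in> tree_vertices" "card {u. tree_edge v u} = 1" by auto
    then show "v \<in> {c (p+1), x, c (p+3)}"
      by (cases rule: tree_vertices_cases) (use card_tree_edge_ne_1 in fastforce)+
  qed
  have "{u. tree_edge x u} = {c p}" "{u. tree_edge (c (p+1)) u} = {c p}"
    "\<exists>w. {u. tree_edge (c (p+3)) u} = {w}"
    using tree_edge_x_iff tree_edge_1_iff tree_edge_3_iff by auto
  then show "{c (p+1), x, c (p+3)} \<subseteq> {v \<in> tree_vertices. card {u. tree_edge v u} = 1}"
    using x_in_tree_vertices c_in_tree_vertices_iff[of 1] c_in_tree_vertices_iff[of 3] small_positions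
    by auto
qed

lemma diamond_edge_c_c_iff:
  assumes "s < n" "t < n"
  shows "diamond_edge (c (p+1)) x (c (p+3)) (c (p+2)) (c (p+s)) (c (p+t)) \<longleftrightarrow>
      (s = 3 \<and> t = 2) \<or> (s = 2 \<and> t = 3) \<or> (s = 2 \<and> t = 1) \<or> (s = 1 \<and> t = 2)"
  unfolding diamond_edge_def
  using c_add_eq_iff[of s 1 p] c_add_eq_iff[of s 2 p] c_add_eq_iff[of s 3 p]
    c_add_eq_iff[of t 1 p] c_add_eq_iff[of t 2 p] c_add_eq_iff[of t 3 p] assms c_ne_x small_positions
  by (auto simp: doubleton_eq_iff)

lemma diamond_edge_x_c_iff:
  assumes "t < n"
  shows "diamond_edge (c (p+1)) x (c (p+3)) (c (p+2)) x (c (p+t)) \<longleftrightarrow> t = 1 \<or> t = 2 \<or> t = 3"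
    and "diamond_edge (c (p+1)) x (c (p+3)) (c (p+2)) (c (p+t)) x \<longleftrightarrow> t = 1 \<or> t = 2 \<or> t = 3"
  unfolding diamond_edge_def
  using c_add_eq_iff[of t 1 p] c_add_eq_iff[of t 2 p] c_add_eq_iff[of t 3 p] assms c_ne_x small_positions
  by (auto simp: doubleton_eq_iff)

lemma not_diamond_edge_x_x: "\<not> diamond_edge (c (p+1)) x (c (p+3)) (c (p+2)) x x"
  unfolding diamond_edge_def using c_ne_x by (auto simp: doubleton_eq_iff)

lemma insert_tree_vertices_cases:
  assumes "v \<in> insert (c (p+2)) tree_vertices"
  obtains "v = x" | t where "t < n" "v = c (p+t)"
  using assms
proof
  assume "v \<in> tree_vertices"
  then show thesis by (cases rule: tree_vertices_cases) (use that in blast)+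
qed (use that(2)[of 2] small_positions in simp)

lemma E_eq_tree_or_diamond:
  assumes "u \<in> insert (c (p+2)) tree_vertices" "v \<in> insert (c (p+2)) tree_vertices"
  shows "E u v \<longleftrightarrow> tree_edge u v \<or> diamond_edge (c (p+1)) x (c (p+3)) (c (p+2)) u v"
  using assms(1)
proof (cases rule: insert_tree_vertices_cases)
  case 1
  show ?thesis
    using assms(2)
  proof (cases rule: insert_tree_vertices_cases)
    case (2 t)
    then show ?thesis
      using \<open>u = x\<close> tree_edge_x_c_iff diamond_edge_x_c_iff(1) four_consecutive by auto
  qed (use 1 E_irrefl not_tree_edge_x_x not_diamond_edge_x_x in simp)
next
  case (2 s)
  show ?thesis
    using assms(2)
  proof (cases rule: insert_tree_vertices_cases)
    case 1
    have "E (c (p+s)) x \<longleftrightarrow> s \<le> 3" using four_consecutive E_sym 2 by blast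
    then show ?thesis using 1 2 tree_edge_c_x_iff diamond_edge_x_c_iff(2) by auto
  next
    case (2 t)
    have "cyc_adj n s t \<longleftrightarrow> (s \<noteq> 2 \<and> t \<noteq> 2 \<and> cyc_adj n s t) \<or>
        (s = 3 \<and> t = 2) \<or> (s = 2 \<and> t = 3) \<or> (s = 2 \<and> t = 1) \<or> (s = 1 \<and> t = 2)"
      using length_cs \<open>s < n\<close> \<open>t < n\<close> unfolding cyc_adj_def by arith
    then show ?thesis
      using \<open>u = c (p+s)\<close> 2 E_c_add_iff tree_edge_c_c_iff diamond_edge_c_c_iff \<open>s < n\<close> by auto
  qed
qed

lemma c_in_inner_vertices_iff: "t < n \<Longrightarrow> c (p+t) \<in> inner_vertices \<longleftrightarrow> t \<notin> {1,2,3}"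
  unfolding inner_vertices_def
  using c_in_tree_vertices_iff c_add_eq_iff[of t 1 p] c_add_eq_iff[of t 3 p] c_ne_x small_positions
  by auto

lemma inner_vertices_cases:
  assumes "v \<in> inner_vertices"
  obtains t where "t < n" "t \<notin> {1,2,3}" "v = c (p+t)"
  using assms c_in_inner_vertices_iff unfolding inner_vertices_def
  by (metis DiffD1 DiffD2 insertCI tree_vertices_cases)

lemma connected_inner_vertices: "connected_on E inner_vertices"
proof -
  let ?R = "restr E inner_vertices"
  have down: "?R\<^sup>*\<^sup>* (c p) (c (p+(n-k))) \<and> c (p+(n-k)) \<in> inner_vertices" if "k \<le> n-4" for k
    using that
  proof (induction k)
    case 0
    then show ?case using c_add_n c_in_inner_vertices_iff[of 0] small_positions by simp
  next
    case (Suc k)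
    then have IH: "?R\<^sup>*\<^sup>* (c p) (c (p+(n-k)))" "c (p+(n-k)) \<in> inner_vertices" by auto
    have "n - Suc k < n" "n - Suc k \<notin> {1,2,3}" using Suc.prems length_cs by auto
    then have inner: "c (p+(n-Suc k)) \<in> inner_vertices" using c_in_inner_vertices_iff by blast
    have "p+(n-k) = Suc (p+(n-Suc k))" using Suc.prems length_cs by simp
    then have "E (c (p+(n-k))) (c (p+(n-Suc k)))" using E_c_Suc E_sym by metis
    then have "?R (c (p+(n-k))) (c (p+(n-Suc k)))" using IH inner by (simp add: restr_def)
    then show ?case using IH inner by (meson rtranclp.rtrancl_into_rtrancl)
  qed
  have "?R\<^sup>*\<^sup>* (c p) y" if "y \<in> inner_vertices" for y
    using that
  proof (cases rule: inner_vertices_cases)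
    case (1 t)
    then show ?thesis using down[of "n-t"] by (cases "t = 0") auto
  qed
  moreover have "c (p+0) \<in> inner_vertices"
    using c_in_inner_vertices_iff[of 0] small_positions by (simp del: add_0_right)
  ultimately show ?thesis using connected_onI_root[OF symp_E] by (metis add_0_right)
qed

lemma acyclic_inner_vertices: "\<not> is_cycle_in E inner_vertices cs'"
proof -
  define w where "w v = (let t = offset p v in if t = 0 then n else t)" for v
  have w_c: "w (c (p+t)) = (if t = 0 then n else t)" if "t < n" for t
    unfolding w_def using offset_c[OF that] by simp
  show ?thesis
  proof (rule no_cycle_if_unique_lower_neighbour[OF symp_E, where w = w])
    fix v u1 u2 assume "v \<in> inner_vertices" "u1 \<in> inner_vertices" "u2 \<in> inner_vertices"
      and e: "E v u1" "E v u2" and le: "w u1 \<le> w v" "w u2 \<le> w v"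
    then obtain t s1 s2 where "t < n" "t \<notin> {1,2,3}" "v = c (p+t)"
      and "s1 < n" "s1 \<notin> {1,2,3}" "u1 = c (p+s1)" and "s2 < n" "s2 \<notin> {1,2,3}" "u2 = c (p+s2)"
      by (metis inner_vertices_cases)
    then show "u1 = u2"
      using unique_lower_cyc_adj_avoiding_123[of n s1 s2 t] length_cs e le E_c_add_iff w_c by auto
  qed
qed

lemma beetle_four_consecutive: "beetle V E (c (p+1)) x (c (p+3)) (c (p+2)) tree_vertices tree_edge"
proof -
  have "is_tree E inner_vertices"
    unfolding is_tree_def inner_vertices_def
    using connected_inner_vertices acyclic_inner_vertices by (simp add: inner_vertices_def tree_vertices_def)
  moreover have "\<forall>u \<in> inner_vertices. \<not> E u (c (p+2))"
  proof
    fix u assume "u \<in> inner_vertices"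
    then obtain t where "t < n" "t \<notin> {1,2,3}" "u = c (p+t)" by (rule inner_vertices_cases)
    then show "\<not> E u (c (p+2))"
      using E_c_add_iff[of t 2 p] small_positions length_cs by (auto simp: cyc_adj_def)
  qed
  moreover have "distinct [c (p+1), x, c (p+3), c (p+2)]"
    using c_add_eq_iff[of 1 3 p] c_add_eq_iff[of 1 2 p] c_add_eq_iff[of 3 2 p] small_positions c_ne_x
    by auto
  moreover have "E x (c (p+1))" "E x (c (p+2))" "E x (c (p+3))"
    using four_consecutive[rule_format, of 1] four_consecutive[rule_format, of 2]
      four_consecutive[rule_format, of 3] small_positions by auto
  moreover from this(1) have "E (c (p+1)) x" by (rule E_sym)
  moreover have "E (c (p+3)) (c (p+2))" "E (c (p+2)) (c (p+1))" "\<not> E (c (p+1)) (c (p+3))"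
    using E_c_add_iff[of 3 2 p] E_c_add_iff[of 2 1 p] E_c_add_iff[of 1 3 p] length_cs
    by (auto simp: cyc_adj_def)
  moreover have "tree_vertices \<subseteq> V - {c (p+2)}"
  proof
    fix v assume "v \<in> tree_vertices"
    then show "v \<in> V - {c (p+2)}"
    proof (cases rule: tree_vertices_cases)
      case (2 t)
      then show ?thesis using c_add_eq_iff[of t 2 p] small_positions c_in_V by auto
    qed (use x_V c_ne_x in auto)
  qed
  moreover have "{c (p+1), x, c (p+3)} \<subseteq> tree_vertices"
    using c_in_tree_vertices_iff[of 1] c_in_tree_vertices_iff[of 3] x_in_tree_vertices small_positions
    by auto
  moreover have "\<forall>u v. tree_edge u v \<longrightarrow> u \<in> tree_vertices \<and> v \<in> tree_vertices \<and> E u v"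
    "\<forall>u v. tree_edge u v \<longrightarrow> tree_edge v u"
    using tree_edgeD symp_tree_edge by (blast dest: sympD)+
  moreover have "\<forall>u \<in> insert (c (p+2)) tree_vertices. \<forall>v \<in> insert (c (p+2)) tree_vertices.
      E u v \<longleftrightarrow> tree_edge u v \<or> diamond_edge (c (p+1)) x (c (p+3)) (c (p+2)) u v"
    using E_eq_tree_or_diamond by blast
  moreover have "{c (p+1), x, c (p+3), c (p+2)} \<subseteq> V" using x_V c_in_V by auto
  ultimately show ?thesis
    unfolding beetle_def using tree_tree_vertices leaves_tree_vertices
    by (simp only: inner_vertices_def[symmetric]) blast
qed

end

lemma card_image_c_add: "K \<subseteq> {..<n} \<Longrightarrow> card ((\<lambda>t. c (a+t)) ` K) = card K"
  by (rule card_image, rule inj_onI) (use c_add_eq_iff in blast)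

context
  assumes beetle_free: "beetle_free V E" and clean: "clean V E C" and nbr: "x \<in> nbhd V E C"
begin

lemma x_in_nbhd_not_major: "x \<in> nbhd V E C - major V E C"
  using nbr clean by (simp add: clean_def)

lemma nbC_no_independent_triple:
  assumes "u \<in> nbC E C x" "v \<in> nbC E C x" "w \<in> nbC E C x" "u \<noteq> v" "u \<noteq> w" "v \<noteq> w"
  shows "E u v \<or> E u w \<or> E v w"
  using x_in_nbhd_not_major assms x_V x_C by (auto simp: major_def)

lemma no_four_consecutive_nbrs: "\<not> (\<forall>t<n. E x (c (p+t)) \<longleftrightarrow> t \<le> 3)"
  using beetle_free beetle_four_consecutive unfolding beetle_free_def by blast

lemma classify_independent_nbC:
  assumes "\<forall>u\<in>nbC E C x. \<forall>v\<in>nbC E C x. \<not> E u v"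
  shows "x \<in> Nij V E C 1 1 \<union> Ni V E C 1"
proof -
  let ?N = "nbC E C x"
  have "finite ?N" using set_cs by (auto simp: nbC_def)
  then have "card ?N \<noteq> 0" using nbr by (auto simp: nbC_def nbhd_def)
  moreover have "\<not> 3 \<le> card ?N"
  proof
    assume "3 \<le> card ?N"
    then obtain T where "T \<subseteq> ?N" "card T = 3" by (meson obtain_subset_with_card_n)
    then obtain u v w where "u \<in> ?N" "v \<in> ?N" "w \<in> ?N" "u \<noteq> v" "u \<noteq> w" "v \<noteq> w"
      by (auto simp: card_3_iff)
    then show False using nbC_no_independent_triple assms by blast
  qed
  ultimately consider "card ?N = 1" | "card ?N = 2" by linarith
  then show ?thesis
  proof cases
    case 1
    then obtain u where "?N = {u}" using card_1_singletonE by blast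
    then have "x \<in> Ni V E C 1" using x_in_nbhd_not_major 1 connected_on_singleton by (auto simp: Ni_def)
    then show ?thesis by blast
  next
    case 2
    then obtain u v where uv: "?N = {u, v}" "u \<noteq> v" by (meson card_2_iff)
    have "\<not> E u v" "\<not> E v u" using assms uv(1) by auto
    then have "comps E {u, v} = {{u}, {v}}"
      by (intro comps_eq_doubleton) (use E_irrefl connected_on_singleton in auto)
    then have "comps E ?N = {{u}, {v}} \<and> {u} \<noteq> {v} \<and> card {u} = 1 \<and> card {v} = 1"
      using uv by simp
    then have "x \<in> Nij V E C 1 1" using x_in_nbhd_not_major unfolding Nij_def by blast
    then show ?thesis by blast
  qed
qed

lemma nbC_edge_consecutive:
  assumes "u \<in> nbC E C x" "v \<in> nbC E C x" "E u v"
  obtains a where "E x (c a)" "E x (c (a+1))"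
proof -
  have "u \<in> C" "v \<in> C" using assms by (auto simp: nbC_def)
  obtain i where i: "i < n" "u = c i" using ex_c_add_eq_if_in_C[OF \<open>u \<in> C\<close>, of 0] by auto
  obtain t where t: "t < n" "v = c (i+t)" using ex_c_add_eq_if_in_C[OF \<open>v \<in> C\<close>, of i] by blast
  have "cyc_adj n 0 t" using E_c_add_iff[of 0 t i] t i assms n_pos by simp
  then consider "t = 1" | "t = n - 1" by (auto simp: cyc_adj_def)
  then show thesis
  proof cases
    case 1
    then show thesis using that[of i] assms i t by (simp add: nbC_def)
  next
    case 2
    then have "c (i + (n-1) + 1) = u" using i c_add_n n_pos by (simp add: add.assoc)
    then show thesis using that[of "i + (n-1)"] assms t 2 by (simp add: nbC_def)
  qed
qed

context
  fixes a :: nat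
  assumes edge_nbrs: "E x (c a)" "E x (c (a+1))"
begin

definition nbr_at :: "nat \<Rightarrow> bool" where "nbr_at t \<longleftrightarrow> E x (c (a+t))"

lemma nbr_at_0_1: "nbr_at 0" "nbr_at 1"
  using edge_nbrs by (simp_all add: nbr_at_def)

lemma nbC_eq_image:
  assumes "\<forall>t<n. nbr_at t \<longleftrightarrow> t \<in> K" "K \<subseteq> {..<n}"
  shows "nbC E C x = (\<lambda>t. c (a+t)) ` K"
proof
  show "nbC E C x \<subseteq> (\<lambda>t. c (a+t)) ` K"
  proof
    fix y assume "y \<in> nbC E C x"
    moreover obtain t where "t < n" "y = c (a+t)" using ex_c_add_eq_if_in_C calculation by (auto simp: nbC_def)
    ultimately show "y \<in> (\<lambda>t. c (a+t)) ` K" using assms(1) by (auto simp: nbr_at_def nbC_def)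
  qed
  show "(\<lambda>t. c (a+t)) ` K \<subseteq> nbC E C x"
    using assms c_in_C by (auto simp: nbr_at_def nbC_def)
qed

lemma nbr_at_no_independent_triple:
  assumes "s < n" "t < n" "r < n" "s \<noteq> t" "s \<noteq> r" "t \<noteq> r" "nbr_at s" "nbr_at t" "nbr_at r"
    "\<not> cyc_adj n s t" "\<not> cyc_adj n s r" "\<not> cyc_adj n t r"
  shows False
proof -
  have "c (a+s) \<in> nbC E C x" "c (a+t) \<in> nbC E C x" "c (a+r) \<in> nbC E C x"
    using assms c_in_C by (auto simp: nbr_at_def nbC_def)
  moreover have "c (a+s) \<noteq> c (a+t)" "c (a+s) \<noteq> c (a+r)" "c (a+t) \<noteq> c (a+r)"
    using assms c_add_eq_iff by auto
  ultimately show False using nbC_no_independent_triple E_c_add_iff assms by blast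
qed

lemma no_four_consecutive_nbr_at: "\<not> (\<forall>t<n. nbr_at ((k+t) mod n) \<longleftrightarrow> t \<le> 3)"
  using no_four_consecutive_nbrs[of "a+k"] by (simp add: nbr_at_def c_add_mod)

lemma not_nbr_at_both_sides: "\<not> (nbr_at (n-1) \<and> nbr_at 2)"
proof
  assume sides: "nbr_at (n-1) \<and> nbr_at 2"
  have "n \<noteq> 5" using even_length by auto
  have "nbr_at t \<longleftrightarrow> t \<in> {n-1, 0, 1, 2}" if "t < n" for t
  proof
    assume "nbr_at t"
    show "t \<in> {n-1, 0, 1, 2}"
    proof (rule ccontr)
      assume t: "t \<notin> {n-1, 0, 1, 2}"
      show False
      proof (cases "t = n-2")
        case True
        show False
          by (rule nbr_at_no_independent_triple[of 0 2 t])
            (use True t \<open>nbr_at t\<close> nbr_at_0_1 sides length_cs \<open>n \<noteq> 5\<close> in \<open>auto simp: cyc_adj_def\<close>)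
      next
        case False
        show False
          by (rule nbr_at_no_independent_triple[of "n-1" 1 t])
            (use False t \<open>nbr_at t\<close> that nbr_at_0_1 sides length_cs in \<open>auto simp: cyc_adj_def\<close>)
      qed
    qed
  qed (use sides nbr_at_0_1 in auto)
  then have "nbr_at ((n-1+t) mod n) \<longleftrightarrow> t \<le> 3" if "t < n" for t
  proof -
    have "(n-1+t) mod n = (if t = 0 then n-1 else t-1)"
      using that length_cs by (auto simp: mod_if)
    then show ?thesis using \<open>\<And>t. t < n \<Longrightarrow> nbr_at t \<longleftrightarrow> t \<in> {n-1, 0, 1, 2}\<close> that length_cs
      by auto
  qed
  then show False using no_four_consecutive_nbr_at by blast
qed

lemma classify_nbr_at_left:
  assumes left: "nbr_at (n-1)" and not_right: "\<not> nbr_at 2"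
  shows "x \<in> Ni V E C 3"
proof -
  have nbrs: "nbr_at t \<longleftrightarrow> t \<in> {n-1, 0, 1} \<or> (t = n-2 \<and> nbr_at (n-2))" if "t < n" for t
  proof
    assume "nbr_at t"
    show "t \<in> {n-1, 0, 1} \<or> (t = n-2 \<and> nbr_at (n-2))"
    proof (rule ccontr)
      assume "\<not> ?thesis"
      then have "t \<noteq> 2" "t \<noteq> n-2" "t \<noteq> n-1" "t \<noteq> 0" "t \<noteq> 1" using not_right \<open>nbr_at t\<close> by auto
      then show False
        by (intro nbr_at_no_independent_triple[of "n-1" 1 t])
          (use \<open>nbr_at t\<close> nbr_at_0_1 left that length_cs in \<open>auto simp: cyc_adj_def\<close>)
    qed
  qed (use left nbr_at_0_1 in auto)
  have "\<not> nbr_at (n-2)"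
  proof
    assume "nbr_at (n-2)"
    have "nbr_at ((n-2+t) mod n) \<longleftrightarrow> t \<le> 3" if "t < n" for t
    proof -
      have "(n-2+t) mod n = (if t < 2 then n-2+t else t-2)"
        using that length_cs by (auto simp: mod_if)
      then show ?thesis using nbrs that length_cs \<open>nbr_at (n-2)\<close> not_right by auto
    qed
    then show False using no_four_consecutive_nbr_at by blast
  qed
  then have "\<forall>t<n. nbr_at t \<longleftrightarrow> t \<in> {n-1, 0, 1}" using nbrs by blast
  then have "nbC E C x = (\<lambda>t. c (a+t)) ` {n-1, 0, 1}"
    using length_cs by (intro nbC_eq_image) auto
  moreover have "card ((\<lambda>t. c (a+t)) ` {n-1, 0, 1}) = 3"
    using card_image_c_add[of "{n-1, 0, 1}" a] length_cs n_pos by (simp add: numeral_3_eq_3)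
  moreover have "connected_on E {c (a+(n-1)), c a, c (a+1)}"
    using E_c_add_iff[of 0 "n-1" a] length_cs n_pos E_c_Suc[of a]
    by (intro connected_on_path3[OF symp_E]) (auto simp: cyc_adj_def)
  ultimately show ?thesis using x_in_nbhd_not_major by (simp add: Ni_def)
qed

lemma classify_nbr_at_right:
  assumes not_left: "\<not> nbr_at (n-1)" and right: "nbr_at 2"
  shows "x \<in> Ni V E C 3"
proof -
  have nbrs: "nbr_at t \<longleftrightarrow> t \<in> {0, 1, 2} \<or> (t = 3 \<and> nbr_at 3)" if "t < n" for t
  proof
    assume "nbr_at t"
    show "t \<in> {0, 1, 2} \<or> (t = 3 \<and> nbr_at 3)"
    proof (rule ccontr)
      assume "\<not> ?thesis"
      then have "t \<noteq> n-1" "t \<noteq> 3" "t \<noteq> 0" "t \<noteq> 1" "t \<noteq> 2" using not_left \<open>nbr_at t\<close> by auto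
      then show False
        by (intro nbr_at_no_independent_triple[of 0 2 t])
          (use \<open>nbr_at t\<close> nbr_at_0_1 right that length_cs in \<open>auto simp: cyc_adj_def\<close>)
    qed
  qed (use right nbr_at_0_1 in auto)
  have "\<not> nbr_at 3"
  proof
    assume "nbr_at 3"
    then have "\<forall>t<n. nbr_at t \<longleftrightarrow> t \<le> 3"
      using nbrs right nbr_at_0_1 by (metis le_Suc_eq numeral_3_eq_3 numeral_2_eq_2 One_nat_def
          insert_iff singletonD le_zero_eq)
    then have "\<forall>t<n. nbr_at ((0+t) mod n) \<longleftrightarrow> t \<le> 3" by simp
    then show False using no_four_consecutive_nbr_at by blast
  qed
  then have "\<forall>t<n. nbr_at t \<longleftrightarrow> t \<in> {0, 1, 2}" using nbrs by blast
  then have "nbC E C x = (\<lambda>t. c (a+t)) ` {0, 1, 2}"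
    using length_cs by (intro nbC_eq_image) auto
  moreover have "card ((\<lambda>t. c (a+t)) ` {0, 1, 2}) = 3"
    using card_image_c_add[of "{0, 1, 2}" a] length_cs n_pos by (simp add: numeral_3_eq_3)
  moreover have "connected_on E {c a, c (a+1), c (a+2)}"
    using E_c_Suc[of a] E_c_Suc[of "a+1"] E_sym
    by (intro connected_on_path3[OF symp_E]) auto
  ultimately show ?thesis using x_in_nbhd_not_major by (simp add: Ni_def)
qed

context
  assumes not_left: "\<not> nbr_at (n-1)" and not_right: "\<not> nbr_at 2"
begin

lemma far_nbr_at: "t < n \<Longrightarrow> nbr_at t \<Longrightarrow> t \<notin> {0, 1} \<Longrightarrow> 3 \<le> t \<and> t \<le> n-2"
  using not_left not_right by (cases "t = 2 \<or> t = n-1") auto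

lemma no_second_nbr_edge:
  assumes q: "3 \<le> q" "q+1 \<le> n-2" "nbr_at q" "nbr_at (q+1)"
  shows False
proof -
  have "nbr_at t \<longleftrightarrow> t \<in> {0, 1, q, q+1}" if "t < n" for t
  proof
    assume "nbr_at t"
    show "t \<in> {0, 1, q, q+1}"
    proof (rule ccontr)
      assume t: "t \<notin> {0, 1, q, q+1}"
      then have far: "3 \<le> t \<and> t \<le> n-2" using far_nbr_at that \<open>nbr_at t\<close> by blast
      show False
      proof (cases "t = q - 1")
        case True
        show False
          by (rule nbr_at_no_independent_triple[of 0 "q+1" t])
            (use True far t q \<open>nbr_at t\<close> nbr_at_0_1 that length_cs in \<open>auto simp: cyc_adj_def\<close>)
      next
        case False
        show False
          by (rule nbr_at_no_independent_triple[of 0 q t])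
            (use False far t q \<open>nbr_at t\<close> nbr_at_0_1 that length_cs in \<open>auto simp: cyc_adj_def\<close>)
      qed
    qed
  qed (use q nbr_at_0_1 in auto)
  then have N: "nbC E C x = {c a, c (a+1)} \<union> {c (a+q), c (a+(q+1))}"
    using q length_cs by (subst nbC_eq_image[where K = "{0, 1, q, q+1}"]) auto
  have not_E: "\<not> E (c (a+s)) (c (a+t))" "\<not> E (c (a+t)) (c (a+s))" if "s \<in> {0, 1}" "t \<in> {q, q+1}" for s t
    using that q n_pos E_c_add_iff[of s t a] E_c_add_iff[of t s a] by (auto simp: cyc_adj_def)
  have "comps E (nbC E C x) = {{c a, c (a+1)}, {c (a+q), c (a+(q+1))}}"
    unfolding N
  proof (rule comps_eq_doubleton)
    show "connected_on E {c a, c (a+1)}" "connected_on E {c (a+q), c (a+(q+1))}"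
      using E_c_Suc[of a] E_c_Suc[of "a+q"] by (auto intro: connected_on_edge[OF symp_E])
  qed (use not_E[of 0 q] not_E[of 0 "q+1"] not_E[of 1 q] not_E[of 1 "q+1"] in auto)
  moreover have "c a \<noteq> c (a+1)" "c (a+q) \<noteq> c (a+(q+1))" "c a \<noteq> c (a+q)" "c a \<noteq> c (a+(q+1))"
    using c_add_eq_iff[of 0 1 a] c_add_eq_iff[of q "q+1" a] c_add_eq_iff[of 0 q a]
      c_add_eq_iff[of 0 "q+1" a] q n_pos
    by auto
  then have "{c a, c (a+1)} \<noteq> {c (a+q), c (a+(q+1))}"
    "card {c a, c (a+1)} = 2" "card {c (a+q), c (a+(q+1))} = 2"
    by (auto simp: doubleton_eq_iff)
  ultimately have "x \<in> Nij V E C 2 2" using x_in_nbhd_not_major unfolding Nij_def by blast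
  then show False using clean by (simp add: clean_def)
qed

text \<open>The arcs from \<open>c (a + 1)\<close> to \<open>c (a + q)\<close> and from \<open>c (a + q)\<close> to \<open>c (a + n)\<close> have
  total length \<open>n - 1\<close>, so one of them is even.\<close>
lemma no_far_nbr:
  assumes q: "q < n" "nbr_at q" "q \<notin> {0, 1}"
  shows False
proof -
  have far: "3 \<le> q" "q \<le> n-2" using far_nbr_at q by auto
  have nbrs: "nbr_at t \<longleftrightarrow> t \<in> {0, 1, q}" if "t < n" for t
  proof
    assume "nbr_at t"
    show "t \<in> {0, 1, q}"
    proof (rule ccontr)
      assume t: "t \<notin> {0, 1, q}"
      then have far_t: "3 \<le> t" "t \<le> n-2" using far_nbr_at that \<open>nbr_at t\<close> by auto
      consider "t = q+1" | "q = t+1" | "t \<noteq> q+1" "q \<noteq> t+1" by blast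
      then show False
      proof cases
        case 1
        then show False using no_second_nbr_edge[of q] far far_t q \<open>nbr_at t\<close> by auto
      next
        case 2
        then show False using no_second_nbr_edge[of t] far far_t q \<open>nbr_at t\<close> by auto
      next
        case 3
        show False
          by (rule nbr_at_no_independent_triple[of 0 q t])
            (use 3 t q far far_t \<open>nbr_at t\<close> nbr_at_0_1 that length_cs in \<open>auto simp: cyc_adj_def\<close>)
      qed
    qed
  qed (use q nbr_at_0_1 in auto)
  have "(q-1) + (n-q) = n-1" using far by simp
  then have "even (q-1) \<or> even (n-q)" using even_length length_cs by presburger
  then consider "even (q-1)" | "even (n-q)" by blast
  then show False
  proof cases
    case 1
    have "odd (q-1)"
    proof (rule odd_arc_between_neighbours[of "q-1" "a+1"])
      show "\<forall>t. 0 < t \<and> t < q-1 \<longrightarrow> \<not> E x (c (a+1+t))"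
      proof (intro allI impI)
        fix t assume "0 < t \<and> t < q-1"
        then have "1+t < n" "1+t \<notin> {0, 1, q}" using far by auto
        then have "\<not> nbr_at (1+t)" using nbrs by blast
        then show "\<not> E x (c (a+1+t))" by (simp add: nbr_at_def add.assoc)
      qed
    qed (use far nbr_at_0_1 q in \<open>auto simp: nbr_at_def\<close>)
    then show False using 1 by simp
  next
    case 2
    have "a+q+(n-q) = a+n" using far by simp
    then have "odd (n-q)"
    proof (intro odd_arc_between_neighbours[of "n-q" "a+q"])
      show "\<forall>t. 0 < t \<and> t < n-q \<longrightarrow> \<not> E x (c (a+q+t))"
      proof (intro allI impI)
        fix t assume "0 < t \<and> t < n-q"
        then have "q+t < n" "q+t \<notin> {0, 1, q}" using far by auto
        then have "\<not> nbr_at (q+t)" using nbrs by blast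
        then show "\<not> E x (c (a+q+t))" by (simp add: nbr_at_def add.assoc)
      qed
    qed (use far nbr_at_0_1 q c_add_n in \<open>auto simp: nbr_at_def\<close>)
    then show False using 2 by simp
  qed
qed

lemma classify_nbr_at_neither: "x \<in> Ni V E C 2"
proof -
  have "\<forall>t<n. nbr_at t \<longleftrightarrow> t \<in> {0, 1}" using no_far_nbr nbr_at_0_1 by blast
  then have "nbC E C x = {c a, c (a+1)}"
    using length_cs by (subst nbC_eq_image[where K = "{0, 1}"]) auto
  moreover have "c a \<noteq> c (a+1)" using c_add_eq_iff[of 0 1 a] length_cs n_pos by simp
  moreover have "connected_on E {c a, c (a+1)}"
    using E_c_Suc[of a] by (auto intro: connected_on_edge[OF symp_E])
  ultimately show ?thesis using x_in_nbhd_not_major by (simp add: Ni_def)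
qed

end

end

lemma classify_nbr: "x \<in> Nij V E C 1 1 \<union> Ni V E C 1 \<union> Ni V E C 2 \<union> Ni V E C 3"
proof (cases "\<forall>u\<in>nbC E C x. \<forall>v\<in>nbC E C x. \<not> E u v")
  case True
  then show ?thesis using classify_independent_nbC by blast
next
  case False
  then obtain a where "E x (c a)" "E x (c (a+1))" by (meson nbC_edge_consecutive)
  then show ?thesis
    using not_nbr_at_both_sides classify_nbr_at_left classify_nbr_at_right classify_nbr_at_neither
    by blast
qed

end

end

theorem lemma3:
  fixes V :: "'a set" and E :: "'a \<Rightarrow> 'a \<Rightarrow> bool" and C :: "'a set"
  assumes "simple_graph V E"
    and "beetle_free V E"
    and "shortest_even_hole V E C"
    and "clean V E C"
  shows "nbhd V E C \<subseteq> Nij V E C 1 1 \<union> Ni V E C 1 \<union> Ni V E C 2 \<union> Ni V E C 3"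
proof
  fix x assume x: "x \<in> nbhd V E C"
  from assms(3) have "hole V E C" "even (card C)" and shortest: "\<forall>D. even_hole V E D \<longrightarrow> card C \<le> card D"
    by (auto simp: shortest_even_hole_def even_hole_def)
  then obtain cs where cs: "C \<subseteq> V" "set cs = C" "distinct cs" "length cs \<ge> 4"
    "\<forall>i < length cs. \<forall>j < length cs.
      E (cs ! i) (cs ! j) \<longleftrightarrow> (j = (i + 1) mod length cs \<or> i = (j + 1) mod length cs)"
    unfolding hole_def by blast
  have "card C = length cs" using cs distinct_card by blast
  then interpret shortest_even_hole_vertex V E C cs x
    using assms(1) cs x shortest \<open>even (card C)\<close> by unfold_locales (auto simp: nbhd_def)
  show "x \<in> Nij V E C 1 1 \<union> Ni V E C 1 \<union> Ni V E C 2 \<union> Ni V E C 3"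
    using classify_nbr assms(2,4) x by blast
qed

end
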